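(* Let $n,g$ be integers with $0\leq g\leq \lfloor \frac{n-3}{2}\rfloor$, and let $G$ be a connected graph of order $n$. Then $G$ has an $R_g$-cutset with $\kappa_g(G)=2$ if and only if one of the following holds: (1) $\kappa(G)=2$ and there exist two vertices $u,v$ such that $G-\{u,v\}$ is disconnected and every connected component of $G-\{u,v\}$ has at least $g+1$ vertices; (2) $\kappa(G)=1$, $g\geq 1$, and both (a) for every cut vertex $u$ of $G$, some connected component of $G-u$ has at most $g$ vertices, and (b) either there exists a cut vertex $v$ such that $G-v$ has at least $3$ connected components, one of which consists of a single vertex and each of the others has at least $g+1$ vertices; or there exist two vertices $x,y$, neither of which is a cut vertex of $G$, such that $G-\{x,y\}$ is disconnected and every connected component of $G-\{x,y\}$ has at least $g+1$ vertices.
   Context: All graphs are finite and simple. $\kappa(G)$ denotes the usual vertex connectivity. A cut vertex of a connected graph $G$ is a vertex $v$ with $G-v$ disconnected. A set $S\subseteq V(G)$ is a cutset if $G-S$ is disconnected. For a non-negative integer $g$, a cutset $S$ is an $R_g$-cutset if every connected component of $G-S$ has at least $g+1$ vertices. If $G$ has at least one $R_g$-cutset, the $g$-extra connectivity $\kappa_g(G)$ is the minimum cardinality of an $R_g$-cutset of $G$. *)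

theory Defs
  imports Main
begin

definition simple_graph :: "'a set \<Rightarrow> ('a \<Rightarrow> 'a \<Rightarrow> bool) \<Rightarrow> bool" where
  "simple_graph V E \<longleftrightarrow> finite V \<and> (\<forall>x y. E x y \<longrightarrow> x \<in> V \<and> y \<in> V)
     \<and> (\<forall>x y. E x y \<longrightarrow> E y x) \<and> (\<forall>x. \<not> E x x)"

definition reach :: "'a set \<Rightarrow> ('a \<Rightarrow> 'a \<Rightarrow> bool) \<Rightarrow> 'a \<Rightarrow> 'a \<Rightarrow> bool" where
  "reach W E x y \<longleftrightarrow> x \<in> W \<and> y \<in> W \<and> (\<lambda>a b. a \<in> W \<and> b \<in> W \<and> E a b)\<^sup>*\<^sup>* x y"

definition connected_on :: "'a set \<Rightarrow> ('a \<Rightarrow> 'a \<Rightarrow> bool) \<Rightarrow> bool" where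
  "connected_on W E \<longleftrightarrow> W \<noteq> {} \<and> (\<forall>x\<in>W. \<forall>y\<in>W. reach W E x y)"

definition disconnected_on :: "'a set \<Rightarrow> ('a \<Rightarrow> 'a \<Rightarrow> bool) \<Rightarrow> bool" where
  "disconnected_on W E \<longleftrightarrow> (\<exists>x\<in>W. \<exists>y\<in>W. \<not> reach W E x y)"

definition components :: "'a set \<Rightarrow> ('a \<Rightarrow> 'a \<Rightarrow> bool) \<Rightarrow> 'a set set" where
  "components W E = {{y. reach W E x y} | x. x \<in> W}"

definition cut_vertex :: "'a set \<Rightarrow> ('a \<Rightarrow> 'a \<Rightarrow> bool) \<Rightarrow> 'a \<Rightarrow> bool" where
  "cut_vertex V E v \<longleftrightarrow> v \<in> V \<and> disconnected_on (V - {v}) E"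

definition cutset :: "'a set \<Rightarrow> ('a \<Rightarrow> 'a \<Rightarrow> bool) \<Rightarrow> 'a set \<Rightarrow> bool" where
  "cutset V E S \<longleftrightarrow> S \<subseteq> V \<and> disconnected_on (V - S) E"

definition Rg_cutset :: "'a set \<Rightarrow> ('a \<Rightarrow> 'a \<Rightarrow> bool) \<Rightarrow> nat \<Rightarrow> 'a set \<Rightarrow> bool" where
  "Rg_cutset V E g S \<longleftrightarrow> cutset V E S \<and> (\<forall>C \<in> components (V - S) E. card C \<ge> g + 1)"

definition kappa :: "'a set \<Rightarrow> ('a \<Rightarrow> 'a \<Rightarrow> bool) \<Rightarrow> nat" where
  "kappa V E = (LEAST k. \<exists>S. S \<subseteq> V \<and> card S = k \<and>
                   (disconnected_on (V - S) E \<or> card (V - S) \<le> 1))"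

text \<open>g-extra connectivity (meaningful when some R_g-cutset exists).\<close>
definition kappa_g :: "'a set \<Rightarrow> ('a \<Rightarrow> 'a \<Rightarrow> bool) \<Rightarrow> nat \<Rightarrow> nat" where
  "kappa_g V E g = (LEAST k. \<exists>S. Rg_cutset V E g S \<and> card S = k)"

end

theory Submission
  imports Defs
begin

text \<open>An \<open>R\<^sub>g\<close>-cutset of size 2 realises \<open>\<kappa>\<^sub>g = 2\<close> exactly when no single vertex is an
  \<open>R\<^sub>g\<close>-cutset. Without cut vertices this is condition (1). With cut vertices, \<open>\<kappa> = 1\<close>, and
  the only new phenomenon is a pair \<open>{x, y}\<close> whose member \<open>x\<close> is a cut vertex: every component
  of \<open>G - x\<close> other than the one containing \<open>y\<close> is a component of \<open>G - {x, y}\<close>, hence large,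
  and the component of \<open>y\<close> contains a component of \<open>G - {x, y}\<close> unless it is \<open>{y}\<close>. Since
  \<open>{x}\<close> is not an \<open>R\<^sub>g\<close>-cutset, \<open>y\<close> must be an isolated vertex of \<open>G - x\<close>, which leaves at
  least two further, large components; conversely such a cut vertex \<open>v\<close> with pendant
  vertex \<open>w\<close> yields the \<open>R\<^sub>g\<close>-cutset \<open>{v, w}\<close>.\<close>

lemma reach_refl: "x \<in> W \<Longrightarrow> reach W E x x"
  unfolding reach_def by auto

lemma reach_trans: "reach W E x y \<Longrightarrow> reach W E y z \<Longrightarrow> reach W E x z"
  unfolding reach_def by (auto intro: rtranclp_trans)

lemma reach_sym:
  assumes "symp E" and "reach W E x y"
  shows "reach W E y x"
proof -
  have "symp (\<lambda>a b. a \<in> W \<and> b \<in> W \<and> E a b)"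
    using \<open>symp E\<close> by (auto simp: symp_def)
  then show ?thesis
    using \<open>reach W E x y\<close> unfolding reach_def by (auto dest: symp_rtranclp sympD)
qed

lemma reach_mono:
  assumes "W' \<subseteq> W" and "reach W' E x y"
  shows "reach W E x y"
proof -
  have "(\<lambda>a b. a \<in> W' \<and> b \<in> W' \<and> E a b) \<le> (\<lambda>a b. a \<in> W \<and> b \<in> W \<and> E a b)"
    using \<open>W' \<subseteq> W\<close> by auto
  then show ?thesis
    using assms unfolding reach_def by (auto dest: rtranclp_mono[THEN predicate2D])
qed

lemma reach_set_in_components: "x \<in> W \<Longrightarrow> {y. reach W E x y} \<in> components W E"
  unfolding components_def by auto

lemma components_subset: "C \<in> components W E \<Longrightarrow> C \<subseteq> W"
  unfolding components_def reach_def by auto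

lemma components_eq_reach_set:
  assumes "symp E" and "C \<in> components W E" and "x \<in> C"
  shows "C = {y. reach W E x y}"
proof -
  obtain c where c: "C = {y. reach W E c y}"
    using \<open>C \<in> components W E\<close> unfolding components_def by auto
  then have "reach W E x c"
    using \<open>x \<in> C\<close> reach_sym[OF \<open>symp E\<close>] by auto
  then show ?thesis
    using c \<open>x \<in> C\<close> by (auto intro: reach_trans)
qed

lemma components_disjoint:
  "symp E \<Longrightarrow> C \<in> components W E \<Longrightarrow> D \<in> components W E \<Longrightarrow> z \<in> C \<Longrightarrow> z \<in> D \<Longrightarrow> C = D"
  using components_eq_reach_set by metis

lemma components_nonempty: "C \<in> components W E \<Longrightarrow> C \<noteq> {}"
  unfolding components_def using reach_refl by fastforce

lemma finite_components: "finite W \<Longrightarrow> finite (components W E)"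
  using components_subset by (metis Pow_iff finite_Pow_iff rev_finite_subset subsetI)

lemma card_components_pos: "finite W \<Longrightarrow> C \<in> components W E \<Longrightarrow> 0 < card C"
  using components_nonempty components_subset by (metis card_gt_0_iff rev_finite_subset)

lemma components_of_subset:
  assumes "symp E" and "C \<in> components W E" and "C \<subseteq> W'" and "W' \<subseteq> W"
  shows "C \<in> components W' E"
proof -
  obtain c where c: "c \<in> C"
    using components_nonempty[OF assms(2)] by auto
  have C: "C = {y. reach W E c y}"
    using components_eq_reach_set[OF assms(1,2) c] .
  have "reach W' E c y" if "y \<in> C" for y
  proof -
    have "(\<lambda>a b. a \<in> W \<and> b \<in> W \<and> E a b)\<^sup>*\<^sup>* c y"
      using that C unfolding reach_def by auto
    then have "(\<lambda>a b. a \<in> W' \<and> b \<in> W' \<and> E a b)\<^sup>*\<^sup>* c y \<and> y \<in> C"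
    proof (induction rule: rtranclp_induct)
      case base
      show ?case using c by simp
    next
      case (step b d)
      then have "d \<in> C"
        using C by (auto simp: reach_def intro: rtranclp.rtrancl_into_rtrancl)
      then show ?case
        using step assms(3) by (auto intro: rtranclp.rtrancl_into_rtrancl)
    qed
    then show ?thesis
      using assms(3) c unfolding reach_def by auto
  qed
  then have "C = {y. reach W' E c y}"
    using C reach_mono[OF assms(4)] by auto
  then show ?thesis
    using c assms(3) reach_set_in_components[of c W' E] by auto
qed

lemma components_Diff_isolated:
  assumes "symp E" and "{y} \<in> components W E"
  shows "components (W - {y}) E = components W E - {{y}}"
proof
  show sup: "components W E - {{y}} \<subseteq> components (W - {y}) E"
  proof
    fix C assume C: "C \<in> components W E - {{y}}"
    have "y \<notin> C"
    proof
      assume "y \<in> C"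
      then have "C = {y}"
        using components_disjoint[OF assms(1) _ assms(2), of C y] C by simp
      then show False
        using C by simp
    qed
    then have "C \<subseteq> W - {y}"
      using C components_subset[of C W E] by auto
    then show "C \<in> components (W - {y}) E"
      using C components_of_subset[OF assms(1), of C W "W - {y}"] by auto
  qed
  show "components (W - {y}) E \<subseteq> components W E - {{y}}"
  proof
    fix K assume K: "K \<in> components (W - {y}) E"
    then obtain k where k: "k \<in> K"
      using components_nonempty by blast
    then have kW: "k \<in> W" "k \<noteq> y"
      using K components_subset by blast+
    define A where "A = {z. reach W E k z}"
    have kA: "k \<in> A"
      using kW reach_refl unfolding A_def by fastforce
    have A: "A \<in> components W E - {{y}}"
      using kW kA reach_set_in_components[of k W E] unfolding A_def by auto
    then have "A = K"
      using components_disjoint[OF assms(1) _ K kA k] sup by blast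
    then show "K \<in> components W E - {{y}}"
      using A by simp
  qed
qed

lemma disconnected_on_iff_card_components:
  assumes "symp E" and "finite W"
  shows "disconnected_on W E \<longleftrightarrow> 2 \<le> card (components W E)"
proof
  assume "disconnected_on W E"
  then obtain a b where ab: "a \<in> W" "b \<in> W" "\<not> reach W E a b"
    unfolding disconnected_on_def by blast
  define A where "A = {z. reach W E a z}"
  define B where "B = {z. reach W E b z}"
  have "b \<in> B" "b \<notin> A"
    using ab by (simp_all add: A_def B_def reach_refl)
  then have "A \<noteq> B"
    by blast
  moreover have "{A, B} \<subseteq> components W E"
    using ab by (simp add: A_def B_def reach_set_in_components)
  ultimately show "2 \<le> card (components W E)"
    using card_mono[OF finite_components[OF assms(2), of E], of "{A, B}"] by simp
next
  assume "2 \<le> card (components W E)"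
  then have "\<not> card (components W E) \<le> Suc 0"
    by simp
  then obtain A B where AB: "A \<in> components W E" "B \<in> components W E" "A \<noteq> B"
    using card_le_Suc0_iff_eq[OF finite_components[OF assms(2), of E]] by blast
  obtain a b where ab: "a \<in> A" "b \<in> B"
    using AB components_nonempty by blast
  have "\<not> reach W E a b"
  proof
    assume "reach W E a b"
    then have "b \<in> A"
      using components_eq_reach_set[OF assms(1) AB(1) ab(1)] by simp
    then show False
      using components_disjoint[OF assms(1) AB(1,2) _ ab(2)] AB(3) by simp
  qed
  moreover have "a \<in> W" "b \<in> W"
    using AB ab components_subset by blast+
  ultimately show "disconnected_on W E"
    unfolding disconnected_on_def by blast
qed

lemma components_large_or_isolated:
  assumes "symp E" and "finite W" and "y \<in> W"
    and large: "\<forall>K \<in> components (W - {y}) E. g + 1 \<le> card K"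
  shows "{y} \<in> components W E \<or> (\<forall>C \<in> components W E. g + 1 \<le> card C)"
proof (cases "{y} \<in> components W E")
  case False
  define D where "D = {z. reach W E y z}"
  have D: "D \<in> components W E" "y \<in> D"
    using assms(3) by (simp_all add: D_def reach_set_in_components reach_refl)
  have "D \<noteq> {y}"
    using D(1) False by auto
  then obtain z where z: "z \<in> D" "z \<noteq> y"
    using D(2) by blast
  then have zW: "z \<in> W - {y}"
    using D components_subset[of D W E] by blast
  define K where "K = {w. reach (W - {y}) E z w}"
  have K: "K \<in> components (W - {y}) E"
    using zW by (simp add: K_def reach_set_in_components)
  have "K \<subseteq> D"
  proof
    fix w assume "w \<in> K"
    then have "reach W E z w"
      using reach_mono[of "W - {y}" W E z w] by (auto simp: K_def)
    then show "w \<in> D"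
      using z(1) reach_trans[of W E y z w] by (simp add: D_def)
  qed
  moreover have "finite D"
    using rev_finite_subset[OF assms(2) components_subset[OF D(1)]] .
  ultimately have "g + 1 \<le> card D"
    using large K card_mono[of D K] by fastforce
  moreover have "g + 1 \<le> card C" if C: "C \<in> components W E" "C \<noteq> D" for C
  proof -
    have "y \<notin> C"
      using components_disjoint[OF assms(1) C(1) D(1)] D(2) C(2) by blast
    then have "C \<subseteq> W - {y}"
      using C(1) components_subset[of C W E] by blast
    then have "C \<in> components (W - {y}) E"
      using components_of_subset[OF assms(1) C(1)] by blast
    then show ?thesis
      using large by blast
  qed
  ultimately show ?thesis
    by blast
qed simp

lemma Rg_cutset_singleton_iff:
  "Rg_cutset V E g {u} \<longleftrightarrow> cut_vertex V E u \<and> (\<forall>C \<in> components (V - {u}) E. g + 1 \<le> card C)"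
  unfolding Rg_cutset_def cutset_def cut_vertex_def by auto

lemma Rg_cutset_pair_at_cut_vertex:
  assumes "symp E" and "finite V" and "Rg_cutset V E g {x, y}" and "x \<noteq> y"
    and "cut_vertex V E x" and "\<not> Rg_cutset V E g {x}"
  shows "3 \<le> card (components (V - {x}) E) \<and>
    (\<exists>C \<in> components (V - {x}) E. card C = 1 \<and>
       (\<forall>C' \<in> components (V - {x}) E. C' \<noteq> C \<longrightarrow> g + 1 \<le> card C'))"
proof -
  have Vxy: "V - {x} - {y} = V - {x, y}"
    by auto
  have y: "y \<in> V - {x}"
    using assms(3,4) by (simp add: Rg_cutset_def cutset_def)
  have large: "\<forall>K \<in> components (V - {x, y}) E. g + 1 \<le> card K"
    using assms(3) by (simp add: Rg_cutset_def)
  have "{y} \<in> components (V - {x}) E \<or> (\<forall>C \<in> components (V - {x}) E. g + 1 \<le> card C)"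
    using components_large_or_isolated[OF assms(1) finite_Diff[OF assms(2)] y large[folded Vxy]] .
  moreover have "\<not> (\<forall>C \<in> components (V - {x}) E. g + 1 \<le> card C)"
    using assms(5,6) by (simp add: Rg_cutset_singleton_iff)
  ultimately have isolated: "{y} \<in> components (V - {x}) E"
    by blast
  have comps: "components (V - {x, y}) E = components (V - {x}) E - {{y}}"
    using components_Diff_isolated[OF assms(1) isolated] by (simp add: Vxy)
  have "2 \<le> card (components (V - {x, y}) E)"
    using assms(3) disconnected_on_iff_card_components[OF assms(1) finite_Diff[OF assms(2)]]
    by (simp add: Rg_cutset_def cutset_def)
  then have "3 \<le> card (components (V - {x}) E)"
    using isolated finite_components[OF finite_Diff[OF assms(2)], of "{x}" E]
    by (simp add: comps card_Diff_singleton)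
  moreover have "\<forall>C' \<in> components (V - {x}) E. C' \<noteq> {y} \<longrightarrow> g + 1 \<le> card C'"
    using large unfolding comps by blast
  ultimately show ?thesis
    using isolated by (intro conjI bexI[of _ "{y}"]) auto
qed

lemma Rg_cutset_pair_at_leaf:
  assumes "symp E" and "finite V" and "cut_vertex V E v"
    and "3 \<le> card (components (V - {v}) E)"
    and C: "C \<in> components (V - {v}) E" "card C = 1"
    and large: "\<forall>C' \<in> components (V - {v}) E. C' \<noteq> C \<longrightarrow> g + 1 \<le> card C'"
  shows "\<exists>S. Rg_cutset V E g S \<and> card S = 2"
proof -
  obtain w where w: "C = {w}"
    using C(2) card_1_singletonE by blast
  have wV: "w \<in> V" "w \<noteq> v"
    using components_subset[OF C(1)] w by auto
  have Vvw: "V - {v} - {w} = V - {v, w}"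
    by auto
  have comps: "components (V - {v, w}) E = components (V - {v}) E - {C}"
    using components_Diff_isolated[OF assms(1), of w "V - {v}"] C(1) w by (simp add: Vvw)
  then have "2 \<le> card (components (V - {v, w}) E)"
    using assms(4) C(1) finite_components[OF finite_Diff[OF assms(2)], of "{v}" E]
    by (simp add: card_Diff_singleton)
  then have "disconnected_on (V - {v, w}) E"
    using disconnected_on_iff_card_components[OF assms(1) finite_Diff[OF assms(2)]] by simp
  moreover have "v \<in> V"
    using assms(3) by (simp add: cut_vertex_def)
  moreover have "\<forall>K \<in> components (V - {v, w}) E. g + 1 \<le> card K"
    using large unfolding comps by blast
  ultimately have "Rg_cutset V E g {v, w}"
    using wV by (simp add: Rg_cutset_def cutset_def)
  then show ?thesis
    using wV(2) by (intro exI[of _ "{v, w}"]) simp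
qed

lemma ex_Rg_cutset_card_2:
  "(\<exists>S. Rg_cutset V E g S \<and> card S = 2) \<longleftrightarrow>
    (\<exists>u v. u \<in> V \<and> v \<in> V \<and> u \<noteq> v \<and> disconnected_on (V - {u, v}) E \<and>
       (\<forall>C \<in> components (V - {u, v}) E. g + 1 \<le> card C))"
proof
  assume "\<exists>S. Rg_cutset V E g S \<and> card S = 2"
  then obtain u v where "Rg_cutset V E g {u, v}" "u \<noteq> v"
    by (auto simp: card_2_iff)
  then show "\<exists>u v. u \<in> V \<and> v \<in> V \<and> u \<noteq> v \<and> disconnected_on (V - {u, v}) E \<and>
       (\<forall>C \<in> components (V - {u, v}) E. g + 1 \<le> card C)"
    by (intro exI[of _ u] exI[of _ v]) (simp add: Rg_cutset_def cutset_def)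
next
  assume "\<exists>u v. u \<in> V \<and> v \<in> V \<and> u \<noteq> v \<and> disconnected_on (V - {u, v}) E \<and>
       (\<forall>C \<in> components (V - {u, v}) E. g + 1 \<le> card C)"
  then obtain u v where "u \<in> V" "v \<in> V" "u \<noteq> v" "disconnected_on (V - {u, v}) E"
      "\<forall>C \<in> components (V - {u, v}) E. g + 1 \<le> card C"
    by blast
  then show "\<exists>S. Rg_cutset V E g S \<and> card S = 2"
    by (intro exI[of _ "{u, v}"]) (simp add: Rg_cutset_def cutset_def)
qed

lemma ex_Rg_cutset_card_2_iff_leaf_or_pair:
  assumes "symp E" and "finite V" and no_singleton: "\<forall>u. \<not> Rg_cutset V E g {u}"
  shows "(\<exists>S. Rg_cutset V E g S \<and> card S = 2) \<longleftrightarrow>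
    ((\<exists>v. cut_vertex V E v \<and> 3 \<le> card (components (V - {v}) E) \<and>
        (\<exists>C \<in> components (V - {v}) E. card C = 1 \<and>
           (\<forall>C' \<in> components (V - {v}) E. C' \<noteq> C \<longrightarrow> g + 1 \<le> card C')))
     \<or> (\<exists>x y. x \<in> V \<and> y \<in> V \<and> x \<noteq> y \<and> \<not> cut_vertex V E x \<and> \<not> cut_vertex V E y \<and>
           disconnected_on (V - {x, y}) E \<and>
           (\<forall>C \<in> components (V - {x, y}) E. g + 1 \<le> card C)))"
    (is "?ex \<longleftrightarrow> ?leaf \<or> ?pair")
proof
  assume ?ex
  then obtain x y where S: "Rg_cutset V E g {x, y}" "x \<noteq> y"
    by (auto simp: card_2_iff)
  consider "cut_vertex V E x" | "cut_vertex V E y" | "\<not> cut_vertex V E x" "\<not> cut_vertex V E y"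
    by blast
  then show "?leaf \<or> ?pair"
  proof cases
    case 1
    then show ?thesis
      using Rg_cutset_pair_at_cut_vertex[OF assms(1,2) S 1 no_singleton[rule_format]]
      by (intro disjI1 exI[of _ x]) simp
  next
    case 2
    have "Rg_cutset V E g {y, x}"
      using S(1) by (simp add: insert_commute)
    then show ?thesis
      using Rg_cutset_pair_at_cut_vertex[OF assms(1,2) _ S(2)[symmetric] 2 no_singleton[rule_format]] 2
      by (intro disjI1 exI[of _ y]) simp
  next
    case 3
    then show ?thesis
      using S by (intro disjI2 exI[of _ x] exI[of _ y]) (simp add: Rg_cutset_def cutset_def)
  qed
next
  assume "?leaf \<or> ?pair"
  then show ?ex
  proof
    assume ?leaf
    then obtain v C where "cut_vertex V E v" "3 \<le> card (components (V - {v}) E)"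
        "C \<in> components (V - {v}) E" "card C = 1"
        "\<forall>C' \<in> components (V - {v}) E. C' \<noteq> C \<longrightarrow> g + 1 \<le> card C'"
      by blast
    then show ?ex
      by (rule Rg_cutset_pair_at_leaf[OF assms(1,2)])
  next
    assume ?pair
    then show ?ex
      unfolding ex_Rg_cutset_card_2 by (elim exE conjE) (intro exI conjI)
  qed
qed

lemma kappa_le:
  assumes "S \<subseteq> V" and "disconnected_on (V - S) E"
  shows "kappa V E \<le> card S"
  unfolding kappa_def by (intro Least_le exI[of _ S]) (simp add: assms)

lemma kappa_attained:
  "\<exists>S. S \<subseteq> V \<and> card S = kappa V E \<and> (disconnected_on (V - S) E \<or> card (V - S) \<le> 1)"
  unfolding kappa_def by (rule LeastI_ex) (rule exI[of _ "card V"], rule exI[of _ V], simp)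

lemma kappa_pos:
  assumes "finite V" and "connected_on V E" and "2 \<le> card V"
  shows "0 < kappa V E"
proof (rule ccontr)
  obtain S where S: "S \<subseteq> V" "card S = kappa V E" "disconnected_on (V - S) E \<or> card (V - S) \<le> 1"
    using kappa_attained[of V E] by blast
  assume "\<not> 0 < kappa V E"
  then have "S = {}"
    using S(1,2) rev_finite_subset[OF assms(1) S(1)] by simp
  then have "disconnected_on V E \<or> card V \<le> 1"
    using S(3) by simp
  then show False
    using assms(2,3) unfolding connected_on_def disconnected_on_def by auto
qed

lemma kappa_eq_1_iff_cut_vertex:
  assumes "finite V" and "connected_on V E" and "3 \<le> card V"
  shows "kappa V E = 1 \<longleftrightarrow> (\<exists>u. cut_vertex V E u)"
proof
  assume "kappa V E = 1"
  then obtain S where S: "S \<subseteq> V" "card S = 1" "disconnected_on (V - S) E \<or> card (V - S) \<le> 1"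
    using kappa_attained[of V E] by metis
  then obtain u where u: "S = {u}"
    using card_1_singletonE by blast
  have "card (V - {u}) = card V - 1"
    using S(1) u assms(1) by simp
  then have "disconnected_on (V - {u}) E"
    using S(3) assms(3) u by auto
  then show "\<exists>u. cut_vertex V E u"
    using S(1) u unfolding cut_vertex_def by blast
next
  assume "\<exists>u. cut_vertex V E u"
  then obtain u where "u \<in> V" "disconnected_on (V - {u}) E"
    unfolding cut_vertex_def by blast
  then have "kappa V E \<le> 1"
    using kappa_le[of "{u}" V E] by simp
  then show "kappa V E = 1"
    using kappa_pos[OF assms(1,2)] assms(3) by linarith
qed

lemma kappa_eq_2I:
  assumes "finite V" and "connected_on V E" and "3 \<le> card V" and "\<nexists>u. cut_vertex V E u"
    and "u \<in> V" "v \<in> V" "u \<noteq> v" and "disconnected_on (V - {u, v}) E"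
  shows "kappa V E = 2"
  using kappa_le[of "{u, v}" V E] kappa_pos[OF assms(1,2)] kappa_eq_1_iff_cut_vertex[OF assms(1-3)] assms
  by fastforce

lemma kappa_g_eq_iff:
  "(\<exists>S. Rg_cutset V E g S) \<and> kappa_g V E g = k \<longleftrightarrow>
    (\<exists>S. Rg_cutset V E g S \<and> card S = k) \<and> (\<forall>T. Rg_cutset V E g T \<longrightarrow> k \<le> card T)"
proof
  assume ex: "(\<exists>S. Rg_cutset V E g S) \<and> kappa_g V E g = k"
  have "\<exists>S. Rg_cutset V E g S \<and> card S = kappa_g V E g"
    unfolding kappa_g_def by (rule LeastI_ex) (use ex in blast)
  moreover have "kappa_g V E g \<le> card T" if "Rg_cutset V E g T" for T
    unfolding kappa_g_def by (rule Least_le) (use that in blast)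
  ultimately show "(\<exists>S. Rg_cutset V E g S \<and> card S = k) \<and> (\<forall>T. Rg_cutset V E g T \<longrightarrow> k \<le> card T)"
    using ex by blast
next
  assume "(\<exists>S. Rg_cutset V E g S \<and> card S = k) \<and> (\<forall>T. Rg_cutset V E g T \<longrightarrow> k \<le> card T)"
  then show "(\<exists>S. Rg_cutset V E g S) \<and> kappa_g V E g = k"
    unfolding kappa_g_def by (auto intro: Least_equality)
qed

lemma Rg_cutsets_card_ge_2_iff:
  assumes "finite V" and "connected_on V E"
  shows "(\<forall>T. Rg_cutset V E g T \<longrightarrow> 2 \<le> card T) \<longleftrightarrow> (\<forall>u. \<not> Rg_cutset V E g {u})"
proof (intro iffI allI impI)
  fix T assume no_singleton: "\<forall>u. \<not> Rg_cutset V E g {u}" and T: "Rg_cutset V E g T"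
  have "T \<noteq> {}"
    using T assms(2) by (auto simp: Rg_cutset_def cutset_def connected_on_def disconnected_on_def)
  moreover have "finite T"
    using T assms(1) rev_finite_subset by (auto simp: Rg_cutset_def cutset_def)
  moreover have "card T \<noteq> 1"
    using T no_singleton card_1_singletonE by metis
  ultimately show "2 \<le> card T"
    by (metis One_nat_def card_0_eq less_2_cases not_le)
qed auto

theorem theorem4p1:
  fixes V :: "'a set" and E :: "'a \<Rightarrow> 'a \<Rightarrow> bool" and n g :: nat
  assumes "simple_graph V E"
    and "card V = n"
    and "int g \<le> (int n - 3) div 2"
    and "connected_on V E"
  shows "((\<exists>S. Rg_cutset V E g S) \<and> kappa_g V E g = 2) \<longleftrightarrow>
    ((kappa V E = 2 \<and>
       (\<exists>u v. u \<in> V \<and> v \<in> V \<and> u \<noteq> v \<and> disconnected_on (V - {u, v}) E \<and>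
              (\<forall>C \<in> components (V - {u, v}) E. card C \<ge> g + 1)))
     \<or>
     (kappa V E = 1 \<and> g \<ge> 1 \<and>
       (\<forall>u. cut_vertex V E u \<longrightarrow> (\<exists>C \<in> components (V - {u}) E. card C \<le> g)) \<and>
       ((\<exists>v. cut_vertex V E v \<and> card (components (V - {v}) E) \<ge> 3 \<and>
            (\<exists>C \<in> components (V - {v}) E. card C = 1 \<and>
               (\<forall>C' \<in> components (V - {v}) E. C' \<noteq> C \<longrightarrow> card C' \<ge> g + 1)))
        \<or>
        (\<exists>x y. x \<in> V \<and> y \<in> V \<and> x \<noteq> y \<and> \<not> cut_vertex V E x \<and> \<not> cut_vertex V E y \<and>
               disconnected_on (V - {x, y}) E \<and>
               (\<forall>C \<in> components (V - {x, y}) E. card C \<ge> g + 1)))))"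
    (is "?L \<longleftrightarrow> (kappa V E = 2 \<and> ?pair) \<or> (kappa V E = 1 \<and> 1 \<le> g \<and> ?small \<and> ?leaf_or_pair)")
proof -
  have sym: "symp E" and fin: "finite V"
    using assms(1) by (auto simp: simple_graph_def symp_def)
  have n3: "3 \<le> card V" \<comment> \<open>the only use of the bound on \<open>g\<close>\<close>
    using assms(2,3) by linarith
  have small_iff: "?small \<longleftrightarrow> (\<forall>u. \<not> Rg_cutset V E g {u})"
    by (auto simp: Rg_cutset_singleton_iff not_le less_Suc_eq_le)
  have L_iff: "?L \<longleftrightarrow> ?small \<and> (\<exists>S. Rg_cutset V E g S \<and> card S = 2)"
    by (simp only: kappa_g_eq_iff Rg_cutsets_card_ge_2_iff[OF fin assms(4)] small_iff conj_commute)
  show ?thesis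
  proof (cases "\<exists>u. cut_vertex V E u")
    case False
    then have ?small "kappa V E \<noteq> 1"
      using kappa_eq_1_iff_cut_vertex[OF fin assms(4) n3] by auto
    moreover have "?pair \<Longrightarrow> kappa V E = 2"
      using kappa_eq_2I[OF fin assms(4) n3 False] by blast
    ultimately show ?thesis
      using L_iff ex_Rg_cutset_card_2[of V E g] by auto
  next
    case True
    then obtain u where u: "cut_vertex V E u"
      by blast
    have "kappa V E = 1" "kappa V E \<noteq> 2"
      using True kappa_eq_1_iff_cut_vertex[OF fin assms(4) n3] by simp_all
    moreover have "?small \<Longrightarrow> 1 \<le> g"
      using u card_components_pos[OF finite_Diff[OF fin, of "{u}"]] by fastforce
    moreover have "?L \<longleftrightarrow> ?small \<and> ?leaf_or_pair"
    proof (cases ?small)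
      case True
      show ?thesis
        unfolding L_iff ex_Rg_cutset_card_2_iff_leaf_or_pair[OF sym fin True[unfolded small_iff]] ..
    next
      case False
      then show ?thesis
        by (simp only: L_iff simp_thms)
    qed
    ultimately show ?thesis
      by argo
  qed
qed

end
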